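(* Let $\Gamma$ be a finite multiset of formulas and $A$ a formula of propositional logic. If the sequent $\Gamma \Rightarrow A$ is derivable in classical propositional logic (i.e. $\Gamma \vdash_c A$), then $\Pi_V, \Gamma \vdash_i A$ (i.e. $A$ is derivable in intuitionistic propositional logic from the assumptions $\Pi_V \cup \Gamma$), where \[ V = (\mathcal{V}^-(\Gamma) \cup \mathcal{V}^+(A)) \cap (\mathcal{V}^+_{ns}(\Gamma) \cup \mathcal{V}^-(A)). \]
   Context: Formulas are built from propositional variables and $\bot$ using $\land$, $\lor$, $\to$; $\lnot A$ abbreviates $A \to \bot$. For a set $V$ of propositional variables, $\Pi_V = \{ p \lor \lnot p \mid p \in V\}$. $\vdash_c$ and $\vdash_i$ denote derivability in classical and intuitionistic propositional logic respectively (e.g. in the cut-free sequent calculi G3cp and G3ip). The sets $\mathcal{V}^+(A)$, $\mathcal{V}^-(A)$ of variables occurring positively, negatively in $A$ are defined simultaneously by: $\mathcal{V}^+(p)=\{p\}$, $\mathcal{V}^+(\bot)=\emptyset$, $\mathcal{V}^+(A\land B)=\mathcal{V}^+(A\lor B)=\mathcal{V}^+(A)\cup\mathcal{V}^+(B)$, $\mathcal{V}^+(A\to B)=\mathcal{V}^-(A)\cup\mathcal{V}^+(B)$; $\mathcal{V}^-(p)=\mathcal{V}^-(\bot)=\emptyset$, $\mathcal{V}^-(A\land B)=\mathcal{V}^-(A\lor B)=\mathcal{V}^-(A)\cup\mathcal{V}^-(B)$, $\mathcal{V}^-(A\to B)=\mathcal{V}^+(A)\cup\mathcal{V}^-(B)$.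 The set $\mathcal{V}^+_{ns}(A)$ of variables occurring non-strictly positively is defined by $\mathcal{V}^+_{ns}(p)=\mathcal{V}^+_{ns}(\bot)=\emptyset$, $\mathcal{V}^+_{ns}(A\land B)=\mathcal{V}^+_{ns}(A\lor B)=\mathcal{V}^+_{ns}(A)\cup\mathcal{V}^+_{ns}(B)$, $\mathcal{V}^+_{ns}(A\to B)=\mathcal{V}^-(A)\cup\mathcal{V}^+_{ns}(B)$. For a finite multiset $\Gamma$, $\mathcal{V}^+(\Gamma)=\bigcup_{A\in\Gamma}\mathcal{V}^+(A)$, and similarly for $\mathcal{V}^-$ and $\mathcal{V}^+_{ns}$. *)

theory Defs
  imports "HOL-Library.Multiset"
begin

datatype 'v form = Var 'v | Bot | And "'v form" "'v form" | Or "'v form" "'v form" | Imp "'v form" "'v form"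

definition Neg :: "'v form \<Rightarrow> 'v form" where "Neg A = Imp A Bot"

inductive G3ip :: "'v form multiset \<Rightarrow> 'v form \<Rightarrow> bool" where
  Ax: "G3ip (add_mset (Var p) \<Gamma>) (Var p)"
| LBot: "G3ip (add_mset Bot \<Gamma>) C"
| LAnd: "G3ip (add_mset A (add_mset B \<Gamma>)) C \<Longrightarrow> G3ip (add_mset (And A B) \<Gamma>) C"
| RAnd: "G3ip \<Gamma> A \<Longrightarrow> G3ip \<Gamma> B \<Longrightarrow> G3ip \<Gamma> (And A B)"
| LOr: "G3ip (add_mset A \<Gamma>) C \<Longrightarrow> G3ip (add_mset B \<Gamma>) C \<Longrightarrow> G3ip (add_mset (Or A B) \<Gamma>) C"
| ROr1: "G3ip \<Gamma> A \<Longrightarrow> G3ip \<Gamma> (Or A B)"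
| ROr2: "G3ip \<Gamma> B \<Longrightarrow> G3ip \<Gamma> (Or A B)"
| LImp: "G3ip (add_mset (Imp A B) \<Gamma>) A \<Longrightarrow> G3ip (add_mset B \<Gamma>) C \<Longrightarrow> G3ip (add_mset (Imp A B) \<Gamma>) C"
| RImp: "G3ip (add_mset A \<Gamma>) B \<Longrightarrow> G3ip \<Gamma> (Imp A B)"

inductive G3cp :: "'v form multiset \<Rightarrow> 'v form multiset \<Rightarrow> bool" where
  Ax: "G3cp (add_mset (Var p) \<Gamma>) (add_mset (Var p) \<Delta>)"
| LBot: "G3cp (add_mset Bot \<Gamma>) \<Delta>"
| LAnd: "G3cp (add_mset A (add_mset B \<Gamma>)) \<Delta> \<Longrightarrow> G3cp (add_mset (And A B) \<Gamma>) \<Delta>"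
| RAnd: "G3cp \<Gamma> (add_mset A \<Delta>) \<Longrightarrow> G3cp \<Gamma> (add_mset B \<Delta>) \<Longrightarrow> G3cp \<Gamma> (add_mset (And A B) \<Delta>)"
| LOr: "G3cp (add_mset A \<Gamma>) \<Delta> \<Longrightarrow> G3cp (add_mset B \<Gamma>) \<Delta> \<Longrightarrow> G3cp (add_mset (Or A B) \<Gamma>) \<Delta>"
| ROr: "G3cp \<Gamma> (add_mset A (add_mset B \<Delta>)) \<Longrightarrow> G3cp \<Gamma> (add_mset (Or A B) \<Delta>)"
| LImp: "G3cp \<Gamma> (add_mset A \<Delta>) \<Longrightarrow> G3cp (add_mset B \<Gamma>) \<Delta> \<Longrightarrow> G3cp (add_mset (Imp A B) \<Gamma>) \<Delta>"
| RImp: "G3cp (add_mset A \<Gamma>) (add_mset B \<Delta>) \<Longrightarrow> G3cp \<Gamma> (add_mset (Imp A B) \<Delta>)"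

fun vpos :: "'v form \<Rightarrow> 'v set" and vneg :: "'v form \<Rightarrow> 'v set" where
  "vpos (Var p) = {p}"
| "vpos Bot = {}"
| "vpos (And A B) = vpos A \<union> vpos B"
| "vpos (Or A B) = vpos A \<union> vpos B"
| "vpos (Imp A B) = vneg A \<union> vpos B"
| "vneg (Var p) = {}"
| "vneg Bot = {}"
| "vneg (And A B) = vneg A \<union> vneg B"
| "vneg (Or A B) = vneg A \<union> vneg B"
| "vneg (Imp A B) = vpos A \<union> vneg B"

fun vns :: "'v form \<Rightarrow> 'v set" where
  "vns (Var p) = {}"
| "vns Bot = {}"
| "vns (And A B) = vns A \<union> vns B"
| "vns (Or A B) = vns A \<union> vns B"
| "vns (Imp A B) = vneg A \<union> vns B"

definition vposM :: "'v form multiset \<Rightarrow> 'v set" where "vposM \<Gamma> = (\<Union>A\<in>set_mset \<Gamma>. vpos A)"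
definition vnegM :: "'v form multiset \<Rightarrow> 'v set" where "vnegM \<Gamma> = (\<Union>A\<in>set_mset \<Gamma>. vneg A)"
definition vnsM :: "'v form multiset \<Rightarrow> 'v set" where "vnsM \<Gamma> = (\<Union>A\<in>set_mset \<Gamma>. vns A)"

definition PiV :: "'v set \<Rightarrow> 'v form multiset" where
  "PiV V = image_mset (\<lambda>p. Or (Var p) (Neg (Var p))) (mset_set V)"

end

theory Submission
  imports Defs
begin

text \<open>
  Suppose \<open>\<Pi>\<^sub>V, \<Gamma> \<Rightarrow> A\<close> has no G3ip derivation.  We build a finite canonical
  Kripke model and a world \<open>r\<close> in it that forces \<open>\<Pi>\<^sub>V\<close> and \<open>\<Gamma>\<close> but not \<open>A\<close>.  Reading off
  a classical valuation at \<open>r\<close> (a variable is true iff it lies outside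
  \<open>X = V\<^sup>-(\<Gamma>) \<union> V\<^sup>+(A)\<close> or is forced at \<open>r\<close>) we show that all of \<open>\<Gamma>\<close> is classically
  true; classical soundness of G3cp makes \<open>A\<close> true, and a polarity argument turns this
  back into \<open>r\<close> forcing \<open>A\<close>, a contradiction.  The excluded-middle assumptions \<open>\<Pi>\<^sub>V\<close>
  are exactly what is needed for \<open>r\<close> to decide the variables on which forcing and
  classical truth could otherwise disagree.
\<close>

lemma G3ip_axiom: "Var p \<in># \<Gamma> \<Longrightarrow> G3ip \<Gamma> (Var p)"
  by (metis G3ip.Ax insert_DiffM)

lemma G3ip_bot: "Bot \<in># \<Gamma> \<Longrightarrow> G3ip \<Gamma> C"
  by (metis G3ip.LBot insert_DiffM)

lemma G3ip_weaken1: "G3ip \<Gamma> C \<Longrightarrow> G3ip (add_mset X \<Gamma>) C"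
proof (induction rule: G3ip.induct)
  case (LAnd A B \<Gamma> C)
  then have "G3ip (add_mset A (add_mset B (add_mset X \<Gamma>))) C" by (simp add: add_mset_commute)
  then show ?case by (simp add: G3ip.LAnd add_mset_commute[of X])
next
  case (LOr A \<Gamma> C B)
  then have "G3ip (add_mset A (add_mset X \<Gamma>)) C" "G3ip (add_mset B (add_mset X \<Gamma>)) C"
    by (simp_all add: add_mset_commute)
  then show ?case by (simp add: G3ip.LOr add_mset_commute[of X])
next
  case (LImp A B \<Gamma> C)
  then have "G3ip (add_mset (Imp A B) (add_mset X \<Gamma>)) A" "G3ip (add_mset B (add_mset X \<Gamma>)) C"
    by (simp_all add: add_mset_commute)
  then show ?case by (simp add: G3ip.LImp add_mset_commute[of X])
next
  case (RImp A \<Gamma> B)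
  then show ?case by (simp add: G3ip.RImp add_mset_commute[of X])
qed (auto intro: G3ip_axiom G3ip_bot G3ip.intros)

lemma G3ip_weaken:
  assumes "G3ip \<Gamma> C" and "\<Gamma> \<subseteq># \<Gamma>'"
  shows "G3ip \<Gamma>' C"
proof -
  have "G3ip (\<Gamma> + \<Delta>) C" for \<Delta>
    using assms(1) by (induction \<Delta>) (auto intro: G3ip_weaken1)
  then show ?thesis using assms(2) by (metis subset_mset.add_diff_inverse)
qed

lemma add_mset_eq_distinct:
  assumes "add_mset X \<Gamma>0 = add_mset D \<Gamma>" and "X \<noteq> D"
  obtains K where "\<Gamma>0 = add_mset D K" and "\<Gamma> = add_mset X K"
  using assms by (auto simp: add_eq_conv_ex)

text \<open>Let \<open>D, \<Gamma> \<Rightarrow> C\<close> be derivable, where \<open>\<Gamma>\<close> still contains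
  at least \<open>n\<close> further copies of \<open>D\<close>.  To derive \<open>R, \<Gamma> \<Rightarrow> C\<close> it suffices to handle the
  inferences whose principal formula is this occurrence of \<open>D\<close> (one hypothesis per left rule);
  all other inferences are permuted below, since every G3ip rule works in an arbitrary context.
  Invertibility uses \<open>n = 0\<close>; contraction uses \<open>n = 1\<close>, i.e. the second copy of \<open>D\<close> stays around.\<close>

lemma distinguished_formula_elim:
  fixes D :: "'v form" and R :: "'v form multiset" and n :: nat
  assumes der: "G3ip (add_mset D \<Gamma>) C" and count: "n \<le> count \<Gamma> D"
    and var_case: "\<And>p \<Gamma>. D = Var p \<Longrightarrow> n \<le> count \<Gamma> D \<Longrightarrow> G3ip (R + \<Gamma>) (Var p)"
    and bot_case: "\<And>\<Gamma> C. D = Bot \<Longrightarrow> n \<le> count \<Gamma> D \<Longrightarrow> G3ip (R + \<Gamma>) C"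
    and and_case: "\<And>A B \<Gamma> C. D = And A B \<Longrightarrow> n \<le> count \<Gamma> D \<Longrightarrow>
      G3ip (add_mset A (add_mset B \<Gamma>)) C \<Longrightarrow> G3ip (R + \<Gamma>) C"
    and or_case: "\<And>A B \<Gamma> C. D = Or A B \<Longrightarrow> n \<le> count \<Gamma> D \<Longrightarrow>
      G3ip (add_mset A \<Gamma>) C \<Longrightarrow> G3ip (add_mset B \<Gamma>) C \<Longrightarrow> G3ip (R + \<Gamma>) C"
    and imp_case: "\<And>A B \<Gamma> C. D = Imp A B \<Longrightarrow> n \<le> count \<Gamma> D \<Longrightarrow>
      G3ip (R + \<Gamma>) A \<Longrightarrow> G3ip (add_mset B \<Gamma>) C \<Longrightarrow> G3ip (R + \<Gamma>) C"
  shows "G3ip (R + \<Gamma>) C"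
  using der count
proof (induction "add_mset D \<Gamma>" C arbitrary: \<Gamma> rule: G3ip.induct)
  case (Ax p \<Gamma>0)
  show ?case
  proof (cases "Var p = D")
    case True
    show ?thesis by (rule var_case[OF True[symmetric] Ax.prems])
  next
    case False
    with Ax.hyps obtain K where "\<Gamma> = add_mset (Var p) K" by (rule add_mset_eq_distinct)
    then show ?thesis by (simp add: G3ip_axiom)
  qed
next
  case (LBot \<Gamma>0 C)
  show ?case
  proof (cases "Bot = D")
    case True
    show ?thesis by (rule bot_case[OF True[symmetric] LBot.prems])
  next
    case False
    with LBot.hyps obtain K where "\<Gamma> = add_mset Bot K" by (rule add_mset_eq_distinct)
    then show ?thesis by (simp add: G3ip_bot)
  qed
next
  case (LAnd A B \<Gamma>0 C)
  show ?case
  proof (cases "And A B = D")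
    case True
    with LAnd.hyps show ?thesis using and_case[OF True[symmetric] LAnd.prems] by simp
  next
    case False
    with LAnd.hyps(3) obtain K where K: "\<Gamma>0 = add_mset D K" "\<Gamma> = add_mset (And A B) K"
      by (rule add_mset_eq_distinct)
    with LAnd False have "G3ip (R + add_mset A (add_mset B K)) C"
      by (intro LAnd.hyps(2)) (auto simp: add_mset_commute)
    with K show ?thesis by (simp add: G3ip.LAnd)
  qed
next
  case (LOr A \<Gamma>0 C B)
  show ?case
  proof (cases "Or A B = D")
    case True
    with LOr.hyps show ?thesis using or_case[OF True[symmetric] LOr.prems] by simp
  next
    case False
    with LOr.hyps(5) obtain K where K: "\<Gamma>0 = add_mset D K" "\<Gamma> = add_mset (Or A B) K"
      by (rule add_mset_eq_distinct)
    with LOr False have "G3ip (R + add_mset A K) C" "G3ip (R + add_mset B K) C"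
      by (auto intro: LOr.hyps(2,4) simp: add_mset_commute)
    with K show ?thesis by (simp add: G3ip.LOr)
  qed
next
  case (LImp A B \<Gamma>0 C)
  show ?case
  proof (cases "Imp A B = D")
    case True
    with LImp.hyps LImp.prems show ?thesis using imp_case[OF True[symmetric] LImp.prems] by simp
  next
    case False
    with LImp.hyps(5) obtain K where K: "\<Gamma>0 = add_mset D K" "\<Gamma> = add_mset (Imp A B) K"
      by (rule add_mset_eq_distinct)
    with LImp False have "G3ip (R + add_mset (Imp A B) K) A" "G3ip (R + add_mset B K) C"
      by (auto intro: LImp.hyps(2,4) simp: add_mset_commute)
    with K show ?thesis by (simp add: G3ip.LImp)
  qed
next
  case (RImp A B)
  then have "G3ip (R + add_mset A \<Gamma>) B"
    by (intro RImp.hyps(2)) (auto simp: add_mset_commute)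
  then show ?case by (simp add: G3ip.RImp)
qed (auto intro: G3ip.intros)

lemma G3ip_inv_And: "G3ip (add_mset (And A B) \<Gamma>) C \<Longrightarrow> G3ip (add_mset A (add_mset B \<Gamma>)) C"
  using distinguished_formula_elim[where D = "And A B" and R = "{#A, B#}" and n = 0] by auto

lemma G3ip_inv_Or1: "G3ip (add_mset (Or A B) \<Gamma>) C \<Longrightarrow> G3ip (add_mset A \<Gamma>) C"
  using distinguished_formula_elim[where D = "Or A B" and R = "{#A#}" and n = 0] by auto

lemma G3ip_inv_Or2: "G3ip (add_mset (Or A B) \<Gamma>) C \<Longrightarrow> G3ip (add_mset B \<Gamma>) C"
  using distinguished_formula_elim[where D = "Or A B" and R = "{#B#}" and n = 0] by auto

lemma G3ip_inv_Imp: "G3ip (add_mset (Imp A B) \<Gamma>) C \<Longrightarrow> G3ip (add_mset B \<Gamma>) C"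
  using distinguished_formula_elim[where D = "Imp A B" and R = "{#B#}" and n = 0] by auto

text \<open>Contraction is admissible, by induction on the size of the contracted formula: a principal
  copy is decomposed by the left rule, the other copy by inversion, and the resulting duplicated
  components are contracted by the induction hypothesis.\<close>

lemma G3ip_contract: "G3ip (add_mset D (add_mset D \<Gamma>)) C \<Longrightarrow> G3ip (add_mset D \<Gamma>) C"
proof (induction D arbitrary: \<Gamma> C rule: measure_induct_rule[where f = size])
  case (less D)
  have other_copy: "\<exists>\<Delta>. \<Theta> = add_mset D \<Delta>" if "1 \<le> count \<Theta> D" for \<Theta>
    using that by (simp add: multi_member_split)
  have "G3ip ({#} + add_mset D \<Gamma>) C"
  proof (rule distinguished_formula_elim[where n = 1])
    show "G3ip (add_mset D (add_mset D \<Gamma>)) C" by fact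
    show "1 \<le> count (add_mset D \<Gamma>) D" by simp
  next
    fix p \<Theta> assume "D = Var p" "1 \<le> count \<Theta> D"
    then show "G3ip ({#} + \<Theta>) (Var p)" by (simp add: G3ip_axiom)
  next
    fix \<Theta> C' assume "D = Bot" "1 \<le> count \<Theta> D"
    then show "G3ip ({#} + \<Theta>) C'" by (simp add: G3ip_bot)
  next
    fix A B \<Theta> C' assume D: "D = And A B" and "1 \<le> count \<Theta> D"
      and prem: "G3ip (add_mset A (add_mset B \<Theta>)) C'"
    then obtain \<Delta> where \<Theta>: "\<Theta> = add_mset D \<Delta>" using other_copy by blast
    have "G3ip (add_mset A (add_mset A (add_mset B (add_mset B \<Delta>)))) C'"
      using G3ip_inv_And[of A B "add_mset A (add_mset B \<Delta>)"] prem \<Theta> D by (simp add: add_mset_commute)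
    then have "G3ip (add_mset B (add_mset B (add_mset A \<Delta>))) C'"
      using less.IH[of A] D by (simp add: add_mset_commute)
    then have "G3ip (add_mset B (add_mset A \<Delta>)) C'"
      using less.IH[of B "add_mset A \<Delta>" C'] D by simp
    then have "G3ip (add_mset A (add_mset B \<Delta>)) C'"
      by (simp add: add_mset_commute)
    then show "G3ip ({#} + \<Theta>) C'" using \<Theta> D by (simp add: G3ip.LAnd)
  next
    fix A B \<Theta> C' assume D: "D = Or A B" and "1 \<le> count \<Theta> D"
      and prems: "G3ip (add_mset A \<Theta>) C'" "G3ip (add_mset B \<Theta>) C'"
    then obtain \<Delta> where \<Theta>: "\<Theta> = add_mset D \<Delta>" using other_copy by blast
    have "G3ip (add_mset A (add_mset A \<Delta>)) C'" "G3ip (add_mset B (add_mset B \<Delta>)) C'"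
      using G3ip_inv_Or1[of A B] G3ip_inv_Or2[of A B] prems \<Theta> D by (simp_all add: add_mset_commute)
    then have "G3ip (add_mset A \<Delta>) C'" "G3ip (add_mset B \<Delta>) C'"
      using less.IH[of A] less.IH[of B] D by simp_all
    then show "G3ip ({#} + \<Theta>) C'" using \<Theta> D by (simp add: G3ip.LOr)
  next
    fix A B \<Theta> C' assume D: "D = Imp A B" and "1 \<le> count \<Theta> D"
      and prems: "G3ip ({#} + \<Theta>) A" "G3ip (add_mset B \<Theta>) C'"
    then obtain \<Delta> where \<Theta>: "\<Theta> = add_mset D \<Delta>" using other_copy by blast
    have "G3ip (add_mset B (add_mset B \<Delta>)) C'"
      using G3ip_inv_Imp[of A B] prems(2) \<Theta> D by (simp add: add_mset_commute)
    then have "G3ip (add_mset B \<Delta>) C'" using less.IH[of B] D by simp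
    then show "G3ip ({#} + \<Theta>) C'" using prems(1) \<Theta> D by (simp add: G3ip.LImp)
  qed
  then show ?case by simp
qed

definition derives :: "'v form set \<Rightarrow> 'v form \<Rightarrow> bool" where
  "derives T G \<longleftrightarrow> G3ip (mset_set T) G"

lemma derives_insert: "finite T \<Longrightarrow> derives (insert F T) G \<Longrightarrow> G3ip (add_mset F (mset_set T)) G"
  by (cases "F \<in> T") (auto simp: derives_def insert_absorb intro: G3ip_weaken1)

text \<open>Adding an assumption that is already present does not help -- this is where contraction is used.\<close>

lemma derives_member:
  assumes fin: "finite T" and F: "F \<in> T" and der: "G3ip (add_mset F (mset_set T)) G"
  shows "derives T G"
proof -
  have T: "mset_set T = add_mset F (mset_set (T - {F}))"
    using fin F by (simp add: mset_set.remove)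
  show ?thesis
    using G3ip_contract[of F "mset_set (T - {F})" G] der unfolding derives_def T by simp
qed

text \<open>The worlds of the canonical model are the saturated subsets of a finite subformula-closed
  set \<open>S\<close>: deductively prime theories, relative to \<open>S\<close>, closed under the left rules.\<close>

definition subformula_closed :: "'v form set \<Rightarrow> bool" where
  "subformula_closed S \<longleftrightarrow>
     (\<forall>B C. And B C \<in> S \<or> Or B C \<in> S \<or> Imp B C \<in> S \<longrightarrow> B \<in> S \<and> C \<in> S)"

definition saturated :: "'v form set \<Rightarrow> 'v form set \<Rightarrow> bool" where
  "saturated S T \<longleftrightarrow> T \<subseteq> S \<and> Bot \<notin> T
     \<and> (\<forall>B C. And B C \<in> T \<longrightarrow> B \<in> T \<and> C \<in> T)
     \<and> (\<forall>B C. Or B C \<in> T \<longrightarrow> B \<in> T \<or> C \<in> T)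
     \<and> (\<forall>B C. Imp B C \<in> T \<longrightarrow> C \<in> T \<or> \<not> derives T B)"

lemma maximal_underivable_exists:
  assumes "finite S" and "S0 \<subseteq> S" and "\<not> derives S0 G"
  obtains T where "S0 \<subseteq> T" "T \<subseteq> S" "\<not> derives T G"
    "\<And>F. F \<in> S \<Longrightarrow> F \<notin> T \<Longrightarrow> G3ip (add_mset F (mset_set T)) G"
proof -
  define U where "U = {T. S0 \<subseteq> T \<and> T \<subseteq> S \<and> \<not> derives T G}"
  have "U \<subseteq> Pow S" unfolding U_def by blast
  then have "finite U" using assms(1) by (simp add: finite_subset)
  moreover have "S0 \<in> U" unfolding U_def using assms by blast
  ultimately obtain T where T: "T \<in> U" and max: "\<forall>T'\<in>U. T \<subseteq> T' \<longrightarrow> T = T'"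
    using finite_has_maximal2 by metis
  have T_props: "S0 \<subseteq> T" "T \<subseteq> S" "\<not> derives T G" using T unfolding U_def by simp_all
  have "G3ip (add_mset F (mset_set T)) G" if "F \<in> S" "F \<notin> T" for F
  proof -
    have "insert F T \<notin> U" using max that by blast
    then have "derives (insert F T) G" using T_props that unfolding U_def by auto
    moreover have "finite T" using T_props(2) assms(1) by (rule finite_subset)
    ultimately show ?thesis by (simp add: derives_insert)
  qed
  with T_props show ?thesis by (rule that)
qed

lemma subformula_closedD:
  "subformula_closed S \<Longrightarrow> And B C \<in> S \<or> Or B C \<in> S \<or> Imp B C \<in> S \<Longrightarrow> B \<in> S \<and> C \<in> S"
  unfolding subformula_closed_def by blast

text \<open>Maximal underivable sets are saturated: a violated closure condition would, by the
  corresponding left rule, let the set itself derive \<open>G\<close>.\<close>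

lemma maximal_underivable_saturated:
  assumes cl: "subformula_closed S" and fin: "finite S" and TS: "T \<subseteq> S" and nT: "\<not> derives T G"
    and max: "\<And>F. F \<in> S \<Longrightarrow> F \<notin> T \<Longrightarrow> G3ip (add_mset F (mset_set T)) G"
  shows "saturated S T"
proof -
  have finT: "finite T" using TS fin by (rule finite_subset)
  have not_principal: "F \<notin> T" if "G3ip (add_mset F (mset_set T)) G" for F
    using derives_member[OF finT _ that] nT by blast
  have max': "G3ip (add_mset F (mset_set T)) G" if "F \<notin> T" "And B C \<in> T \<or> Or B C \<in> T \<or> Imp B C \<in> T"
    "F = B \<or> F = C" for F B C
    using max subformula_closedD[OF cl, of B C] TS that by blast
  have "Bot \<notin> T" using not_principal G3ip.LBot by blast
  moreover have "B \<in> T \<and> C \<in> T" if BC: "And B C \<in> T" for B C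
  proof -
    have "G3ip (add_mset B (add_mset C (mset_set T))) G" if "B \<notin> T \<or> C \<notin> T"
    proof -
      have "G3ip (add_mset B (mset_set T)) G \<or> G3ip (add_mset C (mset_set T)) G"
        using max'[OF _ disjI1[OF BC]] that by blast
      then show ?thesis using G3ip_weaken1 by (metis add_mset_commute)
    qed
    then show ?thesis using not_principal[OF G3ip.LAnd] BC by blast
  qed
  moreover have "B \<in> T \<or> C \<in> T" if BC: "Or B C \<in> T" for B C
  proof -
    have "G3ip (add_mset (Or B C) (mset_set T)) G" if "B \<notin> T" "C \<notin> T"
      using G3ip.LOr max' BC that by blast
    then show ?thesis using not_principal BC by blast
  qed
  moreover have "C \<in> T \<or> \<not> derives T B" if BC: "Imp B C \<in> T" for B C
  proof -
    have "G3ip (add_mset (Imp B C) (mset_set T)) G" if "C \<notin> T" "derives T B"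
    proof (rule G3ip.LImp)
      show "G3ip (add_mset (Imp B C) (mset_set T)) B"
        using that(2) unfolding derives_def by (rule G3ip_weaken1)
      show "G3ip (add_mset C (mset_set T)) G" using max' BC that(1) by blast
    qed
    then show ?thesis using not_principal BC by blast
  qed
  ultimately show ?thesis using TS unfolding saturated_def by blast
qed

lemma lindenbaum:
  assumes "finite S" and "subformula_closed S" and "S0 \<subseteq> S" and "\<not> derives S0 G"
  obtains T where "saturated S T" "S0 \<subseteq> T" "\<not> derives T G"
  using maximal_underivable_exists[OF assms(1,3,4)] maximal_underivable_saturated[OF assms(2,1)]
  by metis

text \<open>Worlds of a finite universe are finite, so \<open>derives\<close> is meaningful on them.\<close>

lemma saturated_finite: "finite S \<Longrightarrow> saturated S T \<Longrightarrow> finite T"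
  unfolding saturated_def using finite_subset by blast

fun forces :: "'v form set \<Rightarrow> 'v form set \<Rightarrow> 'v form \<Rightarrow> bool" where
  "forces S T (Var p) \<longleftrightarrow> Var p \<in> T"
| "forces S T Bot \<longleftrightarrow> False"
| "forces S T (And A B) \<longleftrightarrow> forces S T A \<and> forces S T B"
| "forces S T (Or A B) \<longleftrightarrow> forces S T A \<or> forces S T B"
| "forces S T (Imp A B) \<longleftrightarrow>
     (\<forall>T'. saturated S T' \<longrightarrow> T \<subseteq> T' \<longrightarrow> forces S T' A \<longrightarrow> forces S T' B)"

lemma refuting_extension:
  assumes fin: "finite S" and cl: "subformula_closed S" and sat: "saturated S T"
    and B: "B \<in> S" and nd: "\<not> derives T (Imp B C)"
  obtains T' where "saturated S T'" "T \<subseteq> T'" "B \<in> T'" "\<not> derives T' C"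
proof -
  have "\<not> derives (insert B T) C"
  proof
    assume "derives (insert B T) C"
    then have "G3ip (add_mset B (mset_set T)) C"
      using derives_insert saturated_finite[OF fin sat] by blast
    then have "derives T (Imp B C)" unfolding derives_def by (rule G3ip.RImp)
    with nd show False by contradiction
  qed
  moreover have "insert B T \<subseteq> S" using sat B unfolding saturated_def by blast
  ultimately show ?thesis using lindenbaum[OF fin cl] that by (metis insert_subset)
qed

lemma truth_lemma:
  assumes fin: "finite S" and cl: "subformula_closed S"
  shows "F \<in> S \<Longrightarrow> saturated S T \<Longrightarrow>
    (F \<in> T \<longrightarrow> forces S T F) \<and> (\<not> derives T F \<longrightarrow> \<not> forces S T F)"
proof (induction F arbitrary: T)
  case (Var p)
  have "Var p \<in> T \<Longrightarrow> derives T (Var p)"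
    unfolding derives_def using saturated_finite[OF fin Var.prems(2)] by (simp add: G3ip_axiom)
  then show ?case by auto
next
  case Bot
  then show ?case unfolding saturated_def by simp
next
  case (And B C)
  have "B \<in> S" "C \<in> S" using subformula_closedD[OF cl] And.prems(1) by blast+
  note IH = And.IH(1)[OF \<open>B \<in> S\<close> And.prems(2)] And.IH(2)[OF \<open>C \<in> S\<close> And.prems(2)]
  have "And B C \<in> T \<Longrightarrow> B \<in> T \<and> C \<in> T" using And.prems(2) unfolding saturated_def by blast
  moreover have "derives T B \<Longrightarrow> derives T C \<Longrightarrow> derives T (And B C)"
    unfolding derives_def by (rule G3ip.RAnd)
  ultimately show ?case using IH by auto
next
  case (Or B C)
  have "B \<in> S" "C \<in> S" using subformula_closedD[OF cl] Or.prems(1) by blast+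
  note IH = Or.IH(1)[OF \<open>B \<in> S\<close> Or.prems(2)] Or.IH(2)[OF \<open>C \<in> S\<close> Or.prems(2)]
  have "Or B C \<in> T \<Longrightarrow> B \<in> T \<or> C \<in> T" using Or.prems(2) unfolding saturated_def by blast
  moreover have "derives T B \<or> derives T C \<Longrightarrow> derives T (Or B C)"
    unfolding derives_def using G3ip.ROr1 G3ip.ROr2 by blast
  ultimately show ?case using IH by auto
next
  case (Imp B C)
  have BC: "B \<in> S" "C \<in> S" using subformula_closedD[OF cl] Imp.prems(1) by blast+
  have "forces S T (Imp B C)" if "Imp B C \<in> T"
  proof (simp only: forces.simps, intro allI impI)
    fix T' assume T': "saturated S T'" "T \<subseteq> T'" and fB: "forces S T' B"
    then have "C \<in> T' \<or> \<not> derives T' B" using that unfolding saturated_def by blast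
    then show "forces S T' C" using fB Imp.IH(1)[OF BC(1) T'(1)] Imp.IH(2)[OF BC(2) T'(1)] by blast
  qed
  moreover have "\<not> forces S T (Imp B C)" if nd: "\<not> derives T (Imp B C)"
  proof -
    obtain T' where T': "saturated S T'" "T \<subseteq> T'" "B \<in> T'" "\<not> derives T' C"
      using refuting_extension[OF fin cl Imp.prems(2) BC(1) nd] .
    then show ?thesis using Imp.IH(1)[OF BC(1) T'(1)] Imp.IH(2)[OF BC(2) T'(1)] by auto
  qed
  ultimately show ?case by blast
qed

fun subformulas :: "'v form \<Rightarrow> 'v form set" where
  "subformulas (Var p) = {Var p}"
| "subformulas Bot = {Bot}"
| "subformulas (And A B) = insert (And A B) (subformulas A \<union> subformulas B)"
| "subformulas (Or A B) = insert (Or A B) (subformulas A \<union> subformulas B)"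
| "subformulas (Imp A B) = insert (Imp A B) (subformulas A \<union> subformulas B)"

lemma finite_subformulas: "finite (subformulas F)"
  by (induction F) auto

lemma subformulas_self: "F \<in> subformulas F"
  by (cases F) auto

lemma subformula_closed_subformulas: "subformula_closed (\<Union>(subformulas ` Q))"
proof -
  have "And B C \<in> subformulas F \<or> Or B C \<in> subformulas F \<or> Imp B C \<in> subformulas F \<Longrightarrow>
      B \<in> subformulas F \<and> C \<in> subformulas F" for B C F
    by (induction F) (auto simp: subformulas_self)
  then show ?thesis unfolding subformula_closed_def by blast
qed

lemma countermodel:
  assumes "\<not> G3ip M A"
  obtains S r where "saturated S r" "\<And>F. F \<in># M \<Longrightarrow> forces S r F" "\<not> forces S r A"
proof -
  define S where "S = \<Union>(subformulas ` insert A (set_mset M))"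
  have fin: "finite S" unfolding S_def by (simp add: finite_subformulas)
  have cl: "subformula_closed S" unfolding S_def by (rule subformula_closed_subformulas)
  have MS: "set_mset M \<subseteq> S" and AS: "A \<in> S" unfolding S_def using subformulas_self by blast+
  have "\<not> derives (set_mset M) A"
    using assms G3ip_weaken mset_set_set_mset_msubset unfolding derives_def by blast
  then obtain r where r: "saturated S r" "set_mset M \<subseteq> r" "\<not> derives r A"
    using lindenbaum[OF fin cl MS] by blast
  have "forces S r F" if "F \<in># M" for F
    using truth_lemma[OF fin cl _ r(1), of F] that MS r(2) by blast
  moreover have "\<not> forces S r A" using truth_lemma[OF fin cl AS r(1)] r(3) by blast
  ultimately show ?thesis using r(1) that by blast
qed

fun eval :: "('v \<Rightarrow> bool) \<Rightarrow> 'v form \<Rightarrow> bool" where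
  "eval v (Var p) = v p"
| "eval v Bot = False"
| "eval v (And A B) = (eval v A \<and> eval v B)"
| "eval v (Or A B) = (eval v A \<or> eval v B)"
| "eval v (Imp A B) = (eval v A \<longrightarrow> eval v B)"

lemma G3cp_sound: "G3cp \<Gamma> \<Delta> \<Longrightarrow> \<forall>F\<in>#\<Gamma>. eval v F \<Longrightarrow> \<exists>F\<in>#\<Delta>. eval v F"
  by (induction rule: G3cp.induct) auto

definition root_valuation :: "'v form set \<Rightarrow> 'v set \<Rightarrow> 'v \<Rightarrow> bool" where
  "root_valuation r X p \<longleftrightarrow> p \<notin> X \<or> Var p \<in> r"

text \<open>The two directions are proved simultaneously because implication swaps polarities.\<close>

lemma valuation_transfer:
  assumes decided: "\<And>p. p \<in> V \<Longrightarrow> forces S r (Var p) \<or> forces S r (Neg (Var p))"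
  shows "saturated S w \<Longrightarrow> r \<subseteq> w \<Longrightarrow>
    (vpos F \<subseteq> V \<union> -X \<longrightarrow> vneg F \<subseteq> X \<longrightarrow> forces S w F \<longrightarrow> eval (root_valuation r X) F) \<and>
    (vpos F \<subseteq> X \<longrightarrow> vneg F \<subseteq> V \<union> -X \<longrightarrow> eval (root_valuation r X) F \<longrightarrow> forces S w F)"
proof (induction F arbitrary: w)
  case (Var p)
  have "root_valuation r X p" if "p \<in> V" "Var p \<in> w"
  proof -
    have "\<not> forces S r (Neg (Var p))" using Var.prems that(2) unfolding Neg_def by auto
    then show ?thesis using decided[OF that(1)] unfolding root_valuation_def by simp
  qed
  then show ?case using Var.prems(2) unfolding root_valuation_def by auto
next
  case (Imp G H)
  let ?v = "root_valuation r X"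
  have "eval ?v (Imp G H)"
    if "vpos (Imp G H) \<subseteq> V \<union> -X" "vneg (Imp G H) \<subseteq> X" "forces S w (Imp G H)"
  proof (simp only: eval.simps, intro impI)
    assume "eval ?v G"
    then have "forces S w G" using Imp.IH(1)[OF Imp.prems] that(1,2) by auto
    then have "forces S w H" using that(3) Imp.prems(1) by auto
    then show "eval ?v H" using Imp.IH(2)[OF Imp.prems] that(1,2) by auto
  qed
  moreover have "forces S w (Imp G H)"
    if "vpos (Imp G H) \<subseteq> X" "vneg (Imp G H) \<subseteq> V \<union> -X" "eval ?v (Imp G H)"
  proof (simp only: forces.simps, intro allI impI)
    fix T' assume T': "saturated S T'" "w \<subseteq> T'" and "forces S T' G"
    moreover have "r \<subseteq> T'" using Imp.prems(2) T'(2) by blast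
    ultimately have "eval ?v G" using Imp.IH(1) that(1,2) by auto
    then have "eval ?v H" using that(3) by simp
    then show "forces S T' H" using Imp.IH(2)[OF T'(1) \<open>r \<subseteq> T'\<close>] that(1,2) by auto
  qed
  ultimately show ?case by blast
qed auto

text \<open>At the root itself the first direction needs a weaker hypothesis: strictly positive
  variables are unrestricted, since a variable forced at \<open>r\<close> is true under the valuation.\<close>

lemma strict_valuation_transfer:
  assumes r: "saturated S r"
    and decided: "\<And>p. p \<in> V \<Longrightarrow> forces S r (Var p) \<or> forces S r (Neg (Var p))"
  shows "vns F \<subseteq> V \<union> -X \<Longrightarrow> vneg F \<subseteq> X \<Longrightarrow> forces S r F \<Longrightarrow> eval (root_valuation r X) F"
proof (induction F)
  case (Var p)
  then show ?case unfolding root_valuation_def by simp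
next
  case (Imp G H)
  show ?case
  proof (simp only: eval.simps, intro impI)
    assume "eval (root_valuation r X) G"
    then have "forces S r G"
      using valuation_transfer[OF decided r subset_refl, where F = G and X = X] Imp.prems(1,2) by auto
    then have "forces S r H" using Imp.prems(3) r by auto
    then show "eval (root_valuation r X) H" using Imp.IH(2) Imp.prems(1,2) by auto
  qed
qed auto

text \<open>Finiteness of the variable sets, so that \<open>\<Pi>\<^sub>V\<close> really contains \<open>p \<or> \<not>p\<close> for each \<open>p \<in> V\<close>.\<close>

lemma finite_polarity_vars: "finite (vpos F) \<and> finite (vneg F)"
  by (induction F) auto

theorem mainTheorem1:
  fixes \<Gamma> :: "'v form multiset" and A :: "'v form"
  assumes "G3cp \<Gamma> {#A#}"
  shows "G3ip (PiV ((vnegM \<Gamma> \<union> vpos A) \<inter> (vnsM \<Gamma> \<union> vneg A)) + \<Gamma>) A"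
proof (rule ccontr)
  define X where "X = vnegM \<Gamma> \<union> vpos A"
  define V where "V = X \<inter> (vnsM \<Gamma> \<union> vneg A)"
  assume "\<not> G3ip (PiV ((vnegM \<Gamma> \<union> vpos A) \<inter> (vnsM \<Gamma> \<union> vneg A)) + \<Gamma>) A"
  then have "\<not> G3ip (PiV V + \<Gamma>) A" unfolding V_def X_def .
  then obtain S r where r: "saturated S r" and forced: "\<And>F. F \<in># PiV V + \<Gamma> \<Longrightarrow> forces S r F"
    and not_forced: "\<not> forces S r A"
    by (rule countermodel) blast
  have "finite V" unfolding V_def X_def vnegM_def using finite_polarity_vars by auto
  then have decided: "forces S r (Var p) \<or> forces S r (Neg (Var p))" if "p \<in> V" for p
    using forced[of "Or (Var p) (Neg (Var p))"] that by (simp add: PiV_def)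
  have "eval (root_valuation r X) F" if "F \<in># \<Gamma>" for F
  proof (rule strict_valuation_transfer[OF r decided])
    show "vns F \<subseteq> V \<union> -X" "vneg F \<subseteq> X"
      using that unfolding V_def X_def vnsM_def vnegM_def by auto
    show "forces S r F" using forced that by simp
  qed
  then have "eval (root_valuation r X) A" using G3cp_sound[OF assms] by simp
  moreover have "vpos A \<subseteq> X" "vneg A \<subseteq> V \<union> -X" unfolding V_def X_def by auto
  ultimately have "forces S r A" using valuation_transfer[OF decided r subset_refl] by blast
  with not_forced show False by contradiction
qed

end
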